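(* Let $a$ be a primitive element of $GF(2^m)$ with $m\ge\lceil\log_2 n\rceil$, $n\le 2^m-1$, let $\alpha\ge1$ with $\gcd(2^m-1,\alpha)=1$, and $d=2\alpha\le n-1$. Let $g(x)=\prod_{i=0}^{n-\alpha-1}(x-a^i)$ be the generator polynomial of the $[n,\alpha]$ Reed–Solomon code $C_{0\alpha}$ (all vectors whose polynomial is divisible by $g(x)$). For $0\le i\le\alpha-1$ write $x^{n-\alpha+i}=u_i(x)g(x)+b_i(x)$ with $b_i(x)=\sum_{j=0}^{n-\alpha-1}b_{ij}x^j$, and let $\bar G$ be the $\alpha\times n$ matrix whose $i$-th row ($0\le i\le \alpha-1$) is $(b_{i0},b_{i1},\dots,b_{i(n-\alpha-1)},\mathbf{e}_i)$, where $\mathbf{e}_i$ is the $i$-th standard unit vector of length $\alpha$. Let $\gamma\neq0$ and let $\Delta$ be the diagonal matrix with diagonal entries $\gamma(a^i)^\alpha$, $i=0,\dots,n-1$. Then $G=\begin{bmatrix}\bar G\\ \bar G\Delta\end{bmatrix}$ is a least-update-complexity generator matrix.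
   Context: Vectors are identified with polynomials via $(c_0,\dots,c_{n-1})\leftrightarrow\sum c_ix^i$. The update complexity of a matrix is the maximum, over its rows, of the number of nonzero entries in the row. "Least-update-complexity" means: among all matrices of the form $\begin{bmatrix}\bar G'\\ \bar G'\Delta'\end{bmatrix}$ with $\bar G'$ a generator matrix of the $[n,\alpha]$ Reed–Solomon code $C_{0\alpha}$ and $\Delta'$ an $n\times n$ diagonal matrix, $G$ has the minimum update complexity. *)

theory Defs
  imports Complex_Main "HOL-Computational_Algebra.Polynomial" "Jordan_Normal_Form.Matrix"
begin

definition primitive_elem :: "'a::{field,finite} \<Rightarrow> bool" where
  "primitive_elem a \<longleftrightarrow> a \<noteq> 0 \<and> (\<forall>x. x \<noteq> 0 \<longrightarrow> (\<exists>i::nat. x = a ^ i))"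

definition vec_poly :: "'a::zero vec \<Rightarrow> 'a poly" where
  "vec_poly v = Poly (list_of_vec v)"

definition rs_gen_poly :: "'a::field \<Rightarrow> nat \<Rightarrow> nat \<Rightarrow> 'a poly" where
  "rs_gen_poly a n \<alpha> = (\<Prod>i<n - \<alpha>. [:- (a ^ i), 1:])"

definition rs_code :: "'a::field \<Rightarrow> nat \<Rightarrow> nat \<Rightarrow> 'a vec set" where
  "rs_code a n \<alpha> = {v \<in> carrier_vec n. rs_gen_poly a n \<alpha> dvd vec_poly v}"

definition generator_matrix :: "'a::field vec set \<Rightarrow> nat \<Rightarrow> nat \<Rightarrow> 'a mat \<Rightarrow> bool" where
  "generator_matrix C k n M \<longleftrightarrow> M \<in> carrier_mat k n \<and>
     {transpose_mat M *\<^sub>v c | c. c \<in> carrier_vec k} = C \<and>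
     (\<forall>c \<in> carrier_vec k. transpose_mat M *\<^sub>v c = 0\<^sub>v n \<longrightarrow> c = 0\<^sub>v k)"

definition update_complexity :: "'a::zero mat \<Rightarrow> nat" where
  "update_complexity M =
     Max ({card {j. j < dim_col M \<and> M $$ (i, j) \<noteq> 0} | i. i < dim_row M} \<union> {0})"

definition rs_rem :: "'a::field \<Rightarrow> nat \<Rightarrow> nat \<Rightarrow> nat \<Rightarrow> 'a poly" where
  "rs_rem a n \<alpha> i = monom 1 (n - \<alpha> + i) mod rs_gen_poly a n \<alpha>"

definition rs_Gbar :: "'a::field \<Rightarrow> nat \<Rightarrow> nat \<Rightarrow> 'a mat" where
  "rs_Gbar a n \<alpha> = mat \<alpha> n (\<lambda>(i, j).
      if j < n - \<alpha> then coeff (rs_rem a n \<alpha> i) j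
      else if j - (n - \<alpha>) = i then 1 else 0)"

definition rs_Delta :: "'a::field \<Rightarrow> 'a \<Rightarrow> nat \<Rightarrow> nat \<Rightarrow> 'a mat" where
  "rs_Delta \<gamma> a n \<alpha> = mat n n (\<lambda>(i, j). if i = j then \<gamma> * (a ^ i) ^ \<alpha> else 0)"

definition least_update_complexity :: "'a::field vec set \<Rightarrow> nat \<Rightarrow> nat \<Rightarrow> 'a mat \<Rightarrow> bool" where
  "least_update_complexity C k n G \<longleftrightarrow>
     (\<exists>G0 D0. generator_matrix C k n G0 \<and> D0 \<in> carrier_mat n n \<and> diagonal_mat D0 \<and>
              G = G0 @\<^sub>r (G0 * D0)) \<and>
     (\<forall>G' D'. generator_matrix C k n G' \<and> D' \<in> carrier_mat n n \<and> diagonal_mat D' \<longrightarrow>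
              update_complexity G \<le> update_complexity (G' @\<^sub>r (G' * D')))"

end

theory Submission
  imports Defs "HOL-Library.Disjoint_Sets" "HOL-Library.Z2"
begin

text \<open>The code \<open>C\<^sub>0\<^sub>\<alpha>\<close> is MDS: a nonzero codeword has more than \<open>n - \<alpha>\<close> nonzero entries.
  Indeed its polynomial vanishes at the \<open>n - \<alpha>\<close> distinct points \<open>a ^ 0, \<dots>, a ^ (n - \<alpha> - 1)\<close>,
  while a vector with at most \<open>n - \<alpha>\<close> nonzero entries pairs to a nonzero value with the
  polynomial of degree \<open>< n - \<alpha>\<close> vanishing at all but one point of its support (a Vandermonde
  argument). Hence the first row of any generator matrix \<open>G'\<close>, and so of \<open>[G'; G' \<Delta>']\<close>, has
  weight at least \<open>n - \<alpha> + 1\<close>. Conversely, in characteristic 2 the rows of \<open>Gbar\<close> are the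
  codewords \<open>x ^ (n - \<alpha> + i) + b\<^sub>i\<close>, so \<open>Gbar\<close> is a systematic generator matrix, and each row of
  \<open>Gbar\<close> and of \<open>Gbar \<Delta>\<close>, for any diagonal \<open>\<Delta>\<close>, has at most \<open>n - \<alpha> + 1\<close> nonzero entries.\<close>

lemma CHAR_eq_2_if_even_card:
  assumes "even (card (UNIV :: 'a::{field,finite} set))"
  shows "CHAR('a) = 2"
proof -
  have "of_nat 2 = (0 :: 'a)"
  proof (rule ccontr)
    assume two: "of_nat 2 \<noteq> (0 :: 'a)"
    have "- x \<noteq> x" if "x \<noteq> 0" for x :: 'a
    proof
      assume "- x = x"
      then have "of_nat 2 * x = x + - x"
        by (simp only: of_nat_numeral mult_2)
      with two that show False
        by simp
    qed
    txt \<open>Then \<open>x \<mapsto> -x\<close> pairs off the nonzero elements, so there are evenly many.\<close>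
    then have "(\<Sum>x \<in> UNIV - {0 :: 'a}. 1 :: bit) = 0"
      by (intro sum_involution_eq_0[where h = uminus]) auto
    then have "even (card (UNIV - {0 :: 'a}))"
      using even_of_nat_iff[where 'a = bit] by simp
    with assms show False
      using finite_UNIV_card_ge_0[where 'a = 'a] by (simp add: card_Diff_singleton)
  qed
  then have "CHAR('a) dvd 2"
    by (simp only: of_nat_eq_0_iff_char_dvd)
  then show ?thesis
    using CHAR_not_1 two_is_prime_nat unfolding prime_nat_iff by (metis One_nat_def)
qed

definition hamming_weight :: "'a::zero vec \<Rightarrow> nat" where
  "hamming_weight v = card {j. j < dim_vec v \<and> v $ j \<noteq> 0}"

lemma hamming_weight_le_if_zero_from:
  assumes "v \<in> carrier_vec n" and "\<And>j. k \<le> j \<Longrightarrow> j < n \<Longrightarrow> v $ j = 0"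
  shows "hamming_weight v \<le> k"
proof -
  have "{j. j < dim_vec v \<and> v $ j \<noteq> 0} \<subseteq> {..<k}"
    using assms by (auto intro: ccontr simp: not_less)
  then have "hamming_weight v \<le> card {..<k}"
    unfolding hamming_weight_def by (intro card_mono) auto
  then show ?thesis
    by simp
qed

lemma update_complexity_le_iff:
  "update_complexity M \<le> b \<longleftrightarrow> (\<forall>i < dim_row M. hamming_weight (row M i) \<le> b)"
proof -
  have weight: "card {j. j < dim_col M \<and> M $$ (i, j) \<noteq> 0} = hamming_weight (row M i)"
    if "i < dim_row M" for i
    unfolding hamming_weight_def using that by (intro arg_cong[where f = card]) auto
  have "finite {card {j. j < dim_col M \<and> M $$ (i, j) \<noteq> 0} | i. i < dim_row M}"
    by (rule finite_image_set) simp
  then show ?thesis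
    unfolding update_complexity_def by (auto simp: weight)
qed

lemma row_append_rows:
  assumes "A \<in> carrier_mat r1 nc" "B \<in> carrier_mat r2 nc" "i < r1 + r2"
  shows "row (A @\<^sub>r B) i = (if i < r1 then row A i else row B (i - r1))"
  using assms by (intro eq_vecI) (auto simp: append_rows_def index_mat_four_block)

lemma hamming_weight_row_mult_diagonal_le:
  assumes A: "A \<in> carrier_mat r n" and D: "D \<in> carrier_mat n n" "diagonal_mat D" and i: "i < r"
  shows "hamming_weight (row (A * D) i) \<le> hamming_weight (row A i)"
proof -
  have entry: "(A * D) $$ (i, j) = A $$ (i, j) * D $$ (j, j)" if j: "j < n" for j
  proof -
    have "(A * D) $$ (i, j) = (\<Sum>l\<in>{0..<n}. A $$ (i, l) * D $$ (l, j))"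
      using A D i j by (simp add: scalar_prod_def)
    also have "\<dots> = (\<Sum>l\<in>{0..<n}. if l = j then A $$ (i, j) * D $$ (j, j) else 0)"
      using D j unfolding diagonal_mat_def by (intro sum.cong refl) auto
    finally show ?thesis
      using j by simp
  qed
  show ?thesis
    unfolding hamming_weight_def using A D i entry by (intro card_mono) auto
qed

lemma index_transpose_mult_mat_vec:
  assumes "G \<in> carrier_mat k n" "c \<in> carrier_vec k" "j < n"
  shows "(transpose_mat G *\<^sub>v c) $ j = (\<Sum>i<k. G $$ (i, j) * c $ i)"
  using assms by (simp add: scalar_prod_def atLeast0LessThan)

lemma coeff_vec_poly: "coeff (vec_poly v) j = (if j < dim_vec v then v $ j else 0)"
  unfolding vec_poly_def by (simp add: nth_default_def)

lemma poly_vec_poly: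
  "poly (vec_poly (v :: 'a::comm_ring_1 vec)) x = (\<Sum>j<dim_vec v. v $ j * x ^ j)"
proof -
  have "vec_poly v = (\<Sum>j<dim_vec v. monom (v $ j) j)"
    by (rule poly_eqI) (simp add: coeff_vec_poly coeff_sum coeff_monom)
  then show ?thesis
    by (simp add: poly_sum poly_monom)
qed

lemma vec_poly_minus:
  assumes "u \<in> carrier_vec n" "v \<in> carrier_vec n"
  shows "vec_poly (u - v) = vec_poly u - vec_poly v"
  using assms by (intro poly_eqI) (simp add: coeff_vec_poly)

lemma vec_poly_transpose_mult_vec:
  assumes G: "G \<in> carrier_mat k n" and c: "c \<in> carrier_vec k"
  shows "vec_poly (transpose_mat G *\<^sub>v c) = (\<Sum>i<k. Polynomial.smult (c $ i) (vec_poly (row G i)))"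
proof (rule poly_eqI)
  fix j
  show "coeff (vec_poly (transpose_mat G *\<^sub>v c)) j =
    coeff (\<Sum>i<k. Polynomial.smult (c $ i) (vec_poly (row G i))) j"
    using G c by (auto simp: coeff_vec_poly coeff_sum scalar_prod_def atLeast0LessThan mult.commute)
qed

lemma sum_mult_poly_eq_0_if_moments_vanish:
  fixes v :: "'a::comm_ring_1 vec"
  assumes "\<And>i. i < k \<Longrightarrow> (\<Sum>j<n. v $ j * x j ^ i) = 0" and "degree p < k"
  shows "(\<Sum>j<n. v $ j * poly p (x j)) = 0"
proof -
  have "(\<Sum>j<n. v $ j * poly p (x j)) = (\<Sum>j<n. v $ j * (\<Sum>i\<le>degree p. coeff p i * x j ^ i))"
    by (simp add: poly_altdef)
  also have "\<dots> = (\<Sum>j<n. \<Sum>i\<le>degree p. coeff p i * (v $ j * x j ^ i))"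
    by (simp add: sum_distrib_left mult.left_commute)
  also have "\<dots> = (\<Sum>i\<le>degree p. \<Sum>j<n. coeff p i * (v $ j * x j ^ i))"
    by (rule sum.swap)
  also have "\<dots> = (\<Sum>i\<le>degree p. coeff p i * (\<Sum>j<n. v $ j * x j ^ i))"
    by (simp add: sum_distrib_left)
  also have "\<dots> = 0"
    using assms by (intro sum.neutral) auto
  finally show ?thesis .
qed

lemma sparse_vec_eq_0_if_moments_vanish:
  fixes x :: "nat \<Rightarrow> 'a::field"
  assumes inj: "inj_on x {..<n}" and v: "v \<in> carrier_vec n"
    and moments: "\<And>i. i < k \<Longrightarrow> (\<Sum>j<n. v $ j * x j ^ i) = 0"
    and weight: "hamming_weight v \<le> k"
  shows "v = 0\<^sub>v n"
proof (rule ccontr)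
  define S where "S = {j. j < n \<and> v $ j \<noteq> 0}"
  assume nonzero: "v \<noteq> 0\<^sub>v n"
  have "S \<noteq> {}"
  proof
    assume "S = {}"
    then have "v = 0\<^sub>v n"
      using v unfolding S_def by (intro eq_vecI) auto
    with nonzero show False ..
  qed
  then obtain l where l: "l \<in> S"
    by blast
  have finS: "finite S"
    unfolding S_def by simp
  define p where "p = (\<Prod>j\<in>S - {l}. [:- x j, 1:])"
  have "degree p = card (S - {l})"
    unfolding p_def by (subst degree_prod_eq_sum_degree) auto
  also have "\<dots> < card S"
    using finS l by (rule card_Diff1_less)
  also have "\<dots> \<le> k"
    using weight v unfolding S_def hamming_weight_def by simp
  finally have "degree p < k" .
  with moments have "(\<Sum>j<n. v $ j * poly p (x j)) = 0"
    by (rule sum_mult_poly_eq_0_if_moments_vanish)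
  moreover have "(\<Sum>j<n. v $ j * poly p (x j)) = v $ l * poly p (x l)"
  proof -
    have "l \<in> {..<n}"
      using l unfolding S_def by simp
    moreover have "v $ j * poly p (x j) = 0" if "j \<in> {..<n} - {l}" for j
      using that finS unfolding p_def poly_prod S_def by (cases "v $ j = 0") auto
    ultimately show ?thesis
      by (simp add: sum.remove[of "{..<n}" l] sum.neutral)
  qed
  moreover have "poly p (x l) \<noteq> 0"
    unfolding p_def poly_prod using finS l inj unfolding S_def by (auto simp: inj_on_eq_iff)
  ultimately have "v $ l = 0"
    by simp
  with l show False
    unfolding S_def by simp
qed

lemma card_minus_1_le_if_primitive_elem_power_eq_1:
  fixes a :: "'a::{field,finite}"
  assumes prim: "primitive_elem a" and d: "a ^ d = 1" "0 < d"
  shows "card (UNIV :: 'a set) - 1 \<le> d"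
proof -
  have "UNIV - {0} \<subseteq> (\<lambda>r. a ^ r) ` {..<d}"
  proof
    fix y :: 'a
    assume "y \<in> UNIV - {0}"
    then obtain t where t: "y = a ^ t"
      using prim unfolding primitive_elem_def by auto
    have "a ^ t = (a ^ d) ^ (t div d) * a ^ (t mod d)"
      by (simp add: power_mult[symmetric] power_add[symmetric])
    then show "y \<in> (\<lambda>r. a ^ r) ` {..<d}"
      using t d by simp
  qed
  then have "card (UNIV - {0 :: 'a}) \<le> card ((\<lambda>r. a ^ r) ` {..<d})"
    by (intro card_mono) auto
  also have "\<dots> \<le> d"
    using card_image_le[of "{..<d}" "\<lambda>r. a ^ r"] by simp
  finally show ?thesis
    by (simp add: card_Diff_singleton)
qed

lemma inj_on_power_primitive_elem:
  fixes a :: "'a::{field,finite}"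
  assumes prim: "primitive_elem a"
  shows "inj_on (\<lambda>i. a ^ i) {..<card (UNIV :: 'a set) - 1}"
proof -
  have distinct: "a ^ i \<noteq> a ^ j" if ij: "i < j" "j < card (UNIV :: 'a set) - 1" for i j
  proof
    assume eq: "a ^ i = a ^ j"
    have "a \<noteq> 0"
      using prim unfolding primitive_elem_def by simp
    moreover have "a ^ j = a ^ i * a ^ (j - i)"
      using ij by (simp add: power_add[symmetric])
    ultimately have "a ^ (j - i) = 1"
      using eq by simp
    then have "card (UNIV :: 'a set) - 1 \<le> j - i"
      using ij by (intro card_minus_1_le_if_primitive_elem_power_eq_1[OF prim]) auto
    with ij show False
      by linarith
  qed
  show ?thesis
  proof (rule inj_onI)
    fix i j
    assume "i \<in> {..<card (UNIV :: 'a set) - 1}" "j \<in> {..<card (UNIV :: 'a set) - 1}" "a ^ i = a ^ j"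
    then show "i = j"
      using distinct[of i j] distinct[of j i] by (cases i j rule: linorder_cases) auto
  qed
qed

lemma poly_rs_gen_poly_power_eq_0:
  "i < n - \<alpha> \<Longrightarrow> poly (rs_gen_poly a n \<alpha>) (a ^ i) = 0"
  unfolding rs_gen_poly_def poly_prod by (intro prod_zero) auto

lemma rs_gen_poly_nonzero: "rs_gen_poly a n \<alpha> \<noteq> 0"
  unfolding rs_gen_poly_def by (simp add: prod_zero_iff)

lemma degree_rs_gen_poly: "degree (rs_gen_poly a n \<alpha>) = n - \<alpha>"
  unfolding rs_gen_poly_def by (subst degree_prod_eq_sum_degree) auto

lemma rs_code_min_weight:
  fixes a :: "'a::{field,finite}"
  assumes prim: "primitive_elem a" and n: "n \<le> card (UNIV :: 'a set) - 1"
    and v: "v \<in> rs_code a n \<alpha>" and weight: "hamming_weight v \<le> n - \<alpha>"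
  shows "v = 0\<^sub>v n"
proof (rule sparse_vec_eq_0_if_moments_vanish[where x = "\<lambda>j. a ^ j"])
  show "inj_on (\<lambda>j. a ^ j) {..<n}"
    using n by (intro inj_on_subset[OF inj_on_power_primitive_elem[OF prim]]) auto
  show vc: "v \<in> carrier_vec n"
    using v unfolding rs_code_def by simp
  fix i
  assume i: "i < n - \<alpha>"
  obtain q where q: "vec_poly v = rs_gen_poly a n \<alpha> * q"
    using v unfolding rs_code_def by blast
  have "(\<Sum>j<n. v $ j * (a ^ j) ^ i) = poly (vec_poly v) (a ^ i)"
    using vc by (simp add: poly_vec_poly power_mult[symmetric] mult.commute)
  also have "\<dots> = 0"
    using q poly_rs_gen_poly_power_eq_0[OF i, of a] by simp
  finally show "(\<Sum>j<n. v $ j * (a ^ j) ^ i) = 0" .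
qed (fact weight)

lemma coeff_rs_rem_eq_0:
  assumes "n - \<alpha> \<le> j"
  shows "coeff (rs_rem a n \<alpha> i) j = 0"
proof (cases "rs_rem a n \<alpha> i = 0")
  case False
  then have "degree (rs_rem a n \<alpha> i) < degree (rs_gen_poly a n \<alpha>)"
    using degree_mod_less[OF rs_gen_poly_nonzero] unfolding rs_rem_def by blast
  then show ?thesis
    using assms by (simp add: coeff_eq_0 degree_rs_gen_poly)
qed simp

lemma vec_poly_row_rs_Gbar:
  assumes "i < \<alpha>" "\<alpha> \<le> n"
  shows "vec_poly (row (rs_Gbar a n \<alpha>) i) = rs_rem a n \<alpha> i + monom 1 (n - \<alpha> + i)"
proof (rule poly_eqI)
  fix j
  consider "j < n - \<alpha>" | "n - \<alpha> \<le> j" "j < n" | "n \<le> j"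
    by linarith
  then show "coeff (vec_poly (row (rs_Gbar a n \<alpha>) i)) j = coeff (rs_rem a n \<alpha> i + monom 1 (n - \<alpha> + i)) j"
  proof cases
    case 2
    then have "j - (n - \<alpha>) = i \<longleftrightarrow> n - \<alpha> + i = j"
      by linarith
    with 2 assms show ?thesis
      by (simp add: coeff_vec_poly rs_Gbar_def coeff_monom coeff_rs_rem_eq_0)
  qed (use assms in \<open>auto simp: coeff_vec_poly rs_Gbar_def coeff_monom coeff_rs_rem_eq_0\<close>)
qed

text \<open>The paper's rows \<open>(b\<^sub>i, e\<^sub>i)\<close> are codewords only because \<open>-b\<^sub>i = b\<^sub>i\<close> in characteristic 2.\<close>

lemma rs_gen_poly_dvd_rs_rem_plus_monom:
  assumes "CHAR('a::field) = 2"
  shows "rs_gen_poly (a :: 'a) n \<alpha> dvd rs_rem a n \<alpha> i + monom 1 (n - \<alpha> + i)"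
proof -
  let ?g = "rs_gen_poly a n \<alpha>" and ?x = "monom (1 :: 'a) (n - \<alpha> + i)"
  have "CHAR('a poly) = 2"
    using assms by simp
  have "rs_rem a n \<alpha> i + ?x = ?x + ?x mod ?g"
    unfolding rs_rem_def by (rule add.commute)
  also have "\<dots> = ?x - ?x mod ?g"
    using \<open>CHAR('a poly) = 2\<close> by (rule minus_CHAR_2[symmetric])
  also have "\<dots> = ?g * (?x div ?g)"
    by (rule minus_mod_eq_mult_div)
  finally show ?thesis
    by (rule dvdI)
qed

lemma index_transpose_rs_Gbar_mult_vec_systematic:
  assumes c: "c \<in> carrier_vec \<alpha>" and i: "i < \<alpha>" and "\<alpha> \<le> n"
  shows "(transpose_mat (rs_Gbar a n \<alpha>) *\<^sub>v c) $ (n - \<alpha> + i) = c $ i"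
proof -
  have "(transpose_mat (rs_Gbar a n \<alpha>) *\<^sub>v c) $ (n - \<alpha> + i)
      = (\<Sum>l<\<alpha>. rs_Gbar a n \<alpha> $$ (l, n - \<alpha> + i) * c $ l)"
    using assms by (intro index_transpose_mult_mat_vec) (auto simp: rs_Gbar_def)
  also have "\<dots> = (\<Sum>l<\<alpha>. if l = i then c $ l else 0)"
    using assms by (intro sum.cong) (auto simp: rs_Gbar_def)
  finally show ?thesis
    using i by simp
qed

lemma hamming_weight_row_rs_Gbar:
  assumes i: "i < \<alpha>"
  shows "hamming_weight (row (rs_Gbar a n \<alpha>) i) \<le> n - \<alpha> + 1"
proof -
  let ?r = "row (rs_Gbar a n \<alpha>) i"
  have "{j. j < dim_vec ?r \<and> ?r $ j \<noteq> 0} \<subseteq> {..<n - \<alpha>} \<union> {n - \<alpha> + i}"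
    using i by (auto simp: rs_Gbar_def split: if_splits)
  then have "hamming_weight ?r \<le> card ({..<n - \<alpha>} \<union> {n - \<alpha> + i})"
    unfolding hamming_weight_def by (intro card_mono) auto
  also have "\<dots> \<le> n - \<alpha> + 1"
    using card_Un_le[of "{..<n - \<alpha>}" "{n - \<alpha> + i}"] by simp
  finally show ?thesis .
qed

lemma carrier_transpose_rs_Gbar_mult_vec: "transpose_mat (rs_Gbar a n \<alpha>) *\<^sub>v c \<in> carrier_vec n"
  by (intro carrier_vecI) (simp add: rs_Gbar_def)

lemma transpose_rs_Gbar_mult_vec_in_rs_code:
  assumes char: "CHAR('a::field) = 2" and c: "c \<in> carrier_vec \<alpha>" and \<alpha>: "\<alpha> \<le> n"
  shows "transpose_mat (rs_Gbar (a :: 'a) n \<alpha>) *\<^sub>v c \<in> rs_code a n \<alpha>"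
proof -
  have G: "rs_Gbar a n \<alpha> \<in> carrier_mat \<alpha> n"
    unfolding rs_Gbar_def by simp
  have "rs_gen_poly a n \<alpha> dvd vec_poly (transpose_mat (rs_Gbar a n \<alpha>) *\<^sub>v c)"
    unfolding vec_poly_transpose_mult_vec[OF G c]
    by (intro dvd_sum dvd_smult)
      (simp add: vec_poly_row_rs_Gbar[OF _ \<alpha>] rs_gen_poly_dvd_rs_rem_plus_monom[OF char])
  then show ?thesis
    unfolding rs_code_def using carrier_transpose_rs_Gbar_mult_vec by simp
qed

lemma rs_code_eq_transpose_rs_Gbar_mult_vec:
  fixes a :: "'a::{field,finite}"
  assumes char: "CHAR('a) = 2" and prim: "primitive_elem a"
    and n: "n \<le> card (UNIV :: 'a set) - 1" and \<alpha>: "\<alpha> \<le> n" and v: "v \<in> rs_code a n \<alpha>"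
  shows "v = transpose_mat (rs_Gbar a n \<alpha>) *\<^sub>v vec \<alpha> (\<lambda>i. v $ (n - \<alpha> + i))"
proof -
  define c where "c = vec \<alpha> (\<lambda>i. v $ (n - \<alpha> + i))"
  let ?u = "transpose_mat (rs_Gbar a n \<alpha>) *\<^sub>v c"
  have c: "c \<in> carrier_vec \<alpha>"
    unfolding c_def by simp
  have vc: "v \<in> carrier_vec n"
    using v unfolding rs_code_def by simp
  have uc: "?u \<in> carrier_vec n"
    by (rule carrier_transpose_rs_Gbar_mult_vec)
  have "rs_gen_poly a n \<alpha> dvd vec_poly (v - ?u)"
    unfolding vec_poly_minus[OF vc uc]
    using v transpose_rs_Gbar_mult_vec_in_rs_code[OF char c \<alpha>] unfolding rs_code_def
    by (simp add: dvd_diff)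
  then have diff_code: "v - ?u \<in> rs_code a n \<alpha>"
    unfolding rs_code_def using vc uc by simp
  txt \<open>\<open>?u\<close> agrees with \<open>v\<close> on the systematic positions, so the codeword \<open>v - ?u\<close> has
    weight at most \<open>n - \<alpha>\<close> and therefore vanishes.\<close>
  have zero_on_systematic: "(v - ?u) $ j = 0" if j: "n - \<alpha> \<le> j" "j < n" for j
  proof -
    define i where "i = j - (n - \<alpha>)"
    have i: "i < \<alpha>" and j_eq: "j = n - \<alpha> + i"
      using j \<alpha> unfolding i_def by auto
    have "?u $ j = c $ i"
      unfolding j_eq using c i \<alpha> by (rule index_transpose_rs_Gbar_mult_vec_systematic)
    also have "\<dots> = v $ j"
      unfolding c_def j_eq using i by (simp only: index_vec)
    finally have "?u $ j = v $ j" .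
    moreover have "j < dim_vec ?u"
      using carrier_vecD[OF uc] j by simp
    ultimately show ?thesis
      by simp
  qed
  have "v - ?u \<in> carrier_vec n"
    using vc uc by (rule minus_carrier_vec)
  then have "hamming_weight (v - ?u) \<le> n - \<alpha>"
    using zero_on_systematic by (rule hamming_weight_le_if_zero_from)
  then have "v - ?u = 0\<^sub>v n"
    by (rule rs_code_min_weight[OF prim n diff_code])
  show ?thesis
    unfolding c_def[symmetric]
  proof (rule eq_vecI)
    fix j
    assume "j < dim_vec ?u"
    then have "v $ j - ?u $ j = 0"
      using \<open>v - ?u = 0\<^sub>v n\<close> uc by (metis carrier_vecD index_minus_vec(1) index_zero_vec(1))
    then show "v $ j = ?u $ j"
      by simp
  qed (use vc carrier_vecD[OF uc] in simp)
qed

lemma generator_matrix_rs_Gbar: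
  fixes a :: "'a::{field,finite}"
  assumes char: "CHAR('a) = 2" and prim: "primitive_elem a"
    and n: "n \<le> card (UNIV :: 'a set) - 1" and \<alpha>: "\<alpha> \<le> n"
  shows "generator_matrix (rs_code a n \<alpha>) \<alpha> n (rs_Gbar a n \<alpha>)"
proof -
  let ?G = "rs_Gbar a n \<alpha>"
  have G: "?G \<in> carrier_mat \<alpha> n"
    unfolding rs_Gbar_def by simp
  have "{transpose_mat ?G *\<^sub>v c | c. c \<in> carrier_vec \<alpha>} = rs_code a n \<alpha>"
  proof
    show "{transpose_mat ?G *\<^sub>v c | c. c \<in> carrier_vec \<alpha>} \<subseteq> rs_code a n \<alpha>"
      using transpose_rs_Gbar_mult_vec_in_rs_code[OF char _ \<alpha>] by blast
    show "rs_code a n \<alpha> \<subseteq> {transpose_mat ?G *\<^sub>v c | c. c \<in> carrier_vec \<alpha>}"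
      using rs_code_eq_transpose_rs_Gbar_mult_vec[OF char prim n \<alpha>] vec_carrier by blast
  qed
  moreover have "c = 0\<^sub>v \<alpha>"
    if c: "c \<in> carrier_vec \<alpha>" and zero: "transpose_mat ?G *\<^sub>v c = 0\<^sub>v n" for c
  proof (rule eq_vecI)
    fix i
    assume "i < dim_vec (0\<^sub>v \<alpha> :: 'a vec)"
    then have i: "i < \<alpha>"
      by simp
    have "c $ i = (transpose_mat ?G *\<^sub>v c) $ (n - \<alpha> + i)"
      using c i \<alpha> by (rule index_transpose_rs_Gbar_mult_vec_systematic[symmetric])
    also have "\<dots> = 0"
      using zero i \<alpha> by simp
    finally show "c $ i = 0\<^sub>v \<alpha> $ i"
      using i by simp
  qed (use c in simp)
  ultimately show ?thesis
    unfolding generator_matrix_def using G by blast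
qed

lemma generator_matrix_row:
  assumes gen: "generator_matrix C k n G" and i: "i < k"
  shows "row G i \<in> C" "row G i \<noteq> 0\<^sub>v n"
proof -
  have G: "G \<in> carrier_mat k n"
    using gen unfolding generator_matrix_def by simp
  have row: "row G i = transpose_mat G *\<^sub>v unit_vec k i"
    using G i by (intro eq_vecI) auto
  show "row G i \<in> C"
    using gen i unfolding row generator_matrix_def by auto
  have "unit_vec k i \<noteq> (0\<^sub>v k :: 'a vec)"
    using i by (metis index_unit_vec(2) index_zero_vec(1) zero_neq_one)
  then show "row G i \<noteq> 0\<^sub>v n"
    using gen i unfolding row generator_matrix_def by auto
qed

lemma update_complexity_rs_Gbar_Delta_le:
  assumes D: "D \<in> carrier_mat n n" "diagonal_mat D"
  shows "update_complexity (rs_Gbar a n \<alpha> @\<^sub>r rs_Gbar a n \<alpha> * D) \<le> n - \<alpha> + 1"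
proof -
  let ?G = "rs_Gbar a n \<alpha>"
  have G: "?G \<in> carrier_mat \<alpha> n"
    unfolding rs_Gbar_def by simp
  moreover have GD: "?G * D \<in> carrier_mat \<alpha> n"
    using G D by simp
  moreover have "hamming_weight (row (?G @\<^sub>r ?G * D) i) \<le> n - \<alpha> + 1" if i: "i < \<alpha> + \<alpha>" for i
  proof (cases "i < \<alpha>")
    case True
    then show ?thesis
      using row_append_rows[OF G GD i] hamming_weight_row_rs_Gbar[OF True] by simp
  next
    case False
    then have "hamming_weight (row (?G * D) (i - \<alpha>)) \<le> hamming_weight (row ?G (i - \<alpha>))"
      using G D i by (intro hamming_weight_row_mult_diagonal_le) auto
    also have "\<dots> \<le> n - \<alpha> + 1"
      using False i by (intro hamming_weight_row_rs_Gbar) simp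
    finally show ?thesis
      using row_append_rows[OF G GD i] False by simp
  qed
  moreover have "dim_row (?G @\<^sub>r ?G * D) = \<alpha> + \<alpha>"
    using carrier_append_rows[OF G GD] by simp
  ultimately show ?thesis
    unfolding update_complexity_le_iff by simp
qed

lemma update_complexity_generator_append_rows_gt:
  fixes a :: "'a::{field,finite}"
  assumes prim: "primitive_elem a" and n: "n \<le> card (UNIV :: 'a set) - 1"
    and gen: "generator_matrix (rs_code a n \<alpha>) \<alpha> n G" and "0 < \<alpha>" and B: "B \<in> carrier_mat r n"
  shows "n - \<alpha> < update_complexity (G @\<^sub>r B)"
proof -
  have G: "G \<in> carrier_mat \<alpha> n"
    using gen unfolding generator_matrix_def by simp
  have "\<not> hamming_weight (row G 0) \<le> n - \<alpha>"
    using rs_code_min_weight[OF prim n] generator_matrix_row[OF gen \<open>0 < \<alpha>\<close>] by blast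
  then have "n - \<alpha> < hamming_weight (row G 0)"
    by (rule not_le_imp_less)
  also have "row G 0 = row (G @\<^sub>r B) 0"
    using G B \<open>0 < \<alpha>\<close> by (simp add: row_append_rows)
  also have "hamming_weight (row (G @\<^sub>r B) 0) \<le> update_complexity (G @\<^sub>r B)"
    using update_complexity_le_iff[of "G @\<^sub>r B" "update_complexity (G @\<^sub>r B)"]
      carrier_append_rows[OF G B] \<open>0 < \<alpha>\<close> by simp
  finally show ?thesis .
qed

theorem corollary2:
  fixes a \<gamma> :: "'a::{field,finite}" and m n \<alpha> :: nat
  assumes "card (UNIV :: 'a set) = 2 ^ m"
    and "primitive_elem a"
    and "m \<ge> nat \<lceil>log 2 (real n)\<rceil>"
    and "n \<le> 2 ^ m - 1"
    and "\<alpha> \<ge> 1"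
    and "gcd (2 ^ m - 1) \<alpha> = 1"
    and "2 * \<alpha> \<le> n - 1"
    and "\<gamma> \<noteq> 0"
  shows "least_update_complexity (rs_code a n \<alpha>) \<alpha> n
           (rs_Gbar a n \<alpha> @\<^sub>r (rs_Gbar a n \<alpha> * rs_Delta \<gamma> a n \<alpha>))"
proof -
  let ?G = "rs_Gbar a n \<alpha>" and ?D = "rs_Delta \<gamma> a n \<alpha>"
  have n: "n \<le> card (UNIV :: 'a set) - 1"
    using assms(1,4) by simp
  have "m \<noteq> 0"
    using assms(4,5,7) by (intro notI) simp
  then have "CHAR('a) = 2"
    using assms(1) by (intro CHAR_eq_2_if_even_card) simp
  then have gen: "generator_matrix (rs_code a n \<alpha>) \<alpha> n ?G"
    using assms(2,5,7) n by (intro generator_matrix_rs_Gbar) auto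
  have D: "?D \<in> carrier_mat n n" "diagonal_mat ?D"
    unfolding rs_Delta_def diagonal_mat_def by auto
  have "update_complexity (?G @\<^sub>r ?G * ?D) \<le> update_complexity (G' @\<^sub>r G' * D')"
    if gen': "generator_matrix (rs_code a n \<alpha>) \<alpha> n G'" and D': "D' \<in> carrier_mat n n" for G' D'
  proof -
    have "G' * D' \<in> carrier_mat \<alpha> n"
      using gen' D' unfolding generator_matrix_def by auto
    then have "n - \<alpha> < update_complexity (G' @\<^sub>r G' * D')"
      using assms(5) by (intro update_complexity_generator_append_rows_gt[OF assms(2) n gen']) auto
    then show ?thesis
      using update_complexity_rs_Gbar_Delta_le[OF D, of a \<alpha>] by linarith
  qed
  then show ?thesis
    unfolding least_update_complexity_def using gen D by blast
qed

end
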